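(* Let $B \in \mathbb{R}^{n \times m}$, $c \in \mathbb{R}^m_>$, and let $C = C_1 \times \cdots \times C_\ell \subseteq \mathbb{R}^m_>$ be a nonempty coefficient cone with cones $C_i \subseteq \mathbb{R}^{m_i}_>$, $m_1 + \cdots + m_\ell = m$. Let $P$, $D$, $L$, $I$, $M$ be as in the context, let $M^* \in \mathbb{R}^{(m-\ell)\times n}$ be any generalized inverse of $M$ (i.e. $M M^* M = M$), and set $E = I\,M^* \in \mathbb{R}^{m \times n}$. Then the solution set \[ Z_c = \{ x \in \mathbb{R}^n_> \mid (c \circ x^B) \in C \} \] can be written as \[ Z_c = \{ (y \circ c^{-1})^E \mid y \in Y_c \} \circ e^{L^\perp}, \qquad Y_c = \{ y \in P \mid y^z = c^z \text{ for all } z \in D \}. \]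
   Context: Notation: $\mathbb{R}_>$ denotes the positive reals. For $x \in \mathbb{R}^n_>$ and $y \in \mathbb{R}^n$, $x^y = \prod_{i=1}^n x_i^{y_i}$; for $Y = (y^1,\ldots,y^m) \in \mathbb{R}^{n\times m}$, $x^Y \in \mathbb{R}^m_>$ is given by $(x^Y)_j = x^{y^j}$. The symbol $\circ$ denotes the componentwise product, $c^{-1}$ the componentwise inverse, and for a set $S \subseteq \mathbb{R}^n_>$ and a subspace $V$, $S \circ e^{V} = \{ s \circ e^v \mid s \in S, v \in V\}$ with $e^v$ componentwise. A cone here means a set closed under multiplication by positive scalars. The partition $m = m_1+\cdots+m_\ell$ splits indices $\{1,\ldots,m\}$ into $\ell$ consecutive classes, correspondingly $B = (B_1 \ \cdots\ B_\ell)$ with $B_i \in \mathbb{R}^{n\times m_i}$. Definitions: $\Delta = \Delta_{m_1-1}\times\cdots\times\Delta_{m_\ell-1}$ with $\Delta_{m_i-1} = \{ y \in \mathbb{R}^{m_i}_{\ge} \mid \sum_j y_j = 1\}$; the coefficient set is $P = C \cap \Delta$. For $k \ge 1$, $I_k = \begin{pmatrix} \mathrm{id}_{k-1} \\ -1_{k-1}^{\mathsf T}\end{pmatrix} \in \mathbb{R}^{k\times(k-1)}$, and $I = \mathrm{diag}(I_{m_1},\ldots,I_{m_\ell}) \in \mathbb{R}^{m\times(m-\ell)}$ is block-diagonal. $M = B\,I \in \mathbb{R}^{n\times(m-\ell)}$, the monomial difference subspace is $L = \operatorname{im} M \subseteq \mathbb{R}^n$, and $L^\perp$ its orthogonal complement.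 $J = \mathrm{diag}(1_{m_1}^{\mathsf T},\ldots,1_{m_\ell}^{\mathsf T}) \in \mathbb{R}^{\ell\times m}$ is block-diagonal, $\mathcal{B} = \begin{pmatrix} B \\ J\end{pmatrix} \in \mathbb{R}^{(n+\ell)\times m}$, and the monomial dependency subspace is $D = \ker \mathcal{B} \subseteq \mathbb{R}^m$. *)

theory Defs
  imports Complex_Main
begin

text \<open>Vectors in R^n are functions nat => real vanishing at indices >= n;
  matrices are functions nat => nat => real used only on the index ranges given.\<close>

definition vecs :: "nat \<Rightarrow> (nat \<Rightarrow> real) set" where
  "vecs n = {v. \<forall>i\<ge>n. v i = 0}"

definition posvecs :: "nat \<Rightarrow> (nat \<Rightarrow> real) set" where
  "posvecs n = {v \<in> vecs n. \<forall>i<n. v i > 0}"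

definition is_cone :: "(nat \<Rightarrow> real) set \<Rightarrow> bool" where
  "is_cone S \<longleftrightarrow> (\<forall>v\<in>S. \<forall>t::real. t > 0 \<longrightarrow> (\<lambda>i. t * v i) \<in> S)"

definition bstart :: "nat list \<Rightarrow> nat \<Rightarrow> nat" where
  "bstart ms k = sum_list (take k ms)"

definition blockv :: "nat list \<Rightarrow> nat \<Rightarrow> (nat \<Rightarrow> real) \<Rightarrow> (nat \<Rightarrow> real)" where
  "blockv ms k y = (\<lambda>a. if a < ms ! k then y (bstart ms k + a) else 0)"

definition coeff_cone :: "nat list \<Rightarrow> (nat \<Rightarrow> (nat \<Rightarrow> real) set) \<Rightarrow> (nat \<Rightarrow> real) set" where
  "coeff_cone ms Cs = {y \<in> vecs (sum_list ms). \<forall>k<length ms. blockv ms k y \<in> Cs k}"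

definition simplices :: "nat list \<Rightarrow> (nat \<Rightarrow> real) set" where
  "simplices ms = {y \<in> vecs (sum_list ms). (\<forall>j. y j \<ge> 0) \<and>
      (\<forall>k<length ms. (\<Sum>a<ms ! k. y (bstart ms k + a)) = 1)}"

definition coeff_set :: "nat list \<Rightarrow> (nat \<Rightarrow> (nat \<Rightarrow> real) set) \<Rightarrow> (nat \<Rightarrow> real) set" where
  "coeff_set ms Cs = coeff_cone ms Cs \<inter> simplices ms"

definition Iblock :: "nat \<Rightarrow> nat \<Rightarrow> nat \<Rightarrow> real" where
  "Iblock k a b = (if a = b then 1 else if a = k - 1 then -1 else 0)"

text \<open>I = diag(I_{m_1},...,I_{m_l}) in R^{m x (m-l)}; column block k starts at bstart ms k - k.\<close>
definition Imat :: "nat list \<Rightarrow> nat \<Rightarrow> nat \<Rightarrow> real" where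
  "Imat ms r c = (\<Sum>k<length ms.
      if bstart ms k \<le> r \<and> r < bstart ms k + ms ! k \<and>
         bstart ms k - k \<le> c \<and> c < bstart ms k - k + (ms ! k - 1)
      then Iblock (ms ! k) (r - bstart ms k) (c - (bstart ms k - k)) else 0)"

definition Jmat :: "nat list \<Rightarrow> nat \<Rightarrow> nat \<Rightarrow> real" where
  "Jmat ms k j = (if bstart ms k \<le> j \<and> j < bstart ms k + ms ! k then 1 else 0)"

definition mmul :: "(nat \<Rightarrow> nat \<Rightarrow> real) \<Rightarrow> (nat \<Rightarrow> nat \<Rightarrow> real) \<Rightarrow> nat \<Rightarrow> nat \<Rightarrow> nat \<Rightarrow> real" where
  "mmul A B p = (\<lambda>i j. \<Sum>l<p. A i l * B l j)"

definition vpow :: "(nat \<Rightarrow> real) \<Rightarrow> (nat \<Rightarrow> real) \<Rightarrow> nat \<Rightarrow> real" where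
  "vpow x z p = (\<Prod>i<p. x i powr z i)"

definition mpow :: "(nat \<Rightarrow> real) \<Rightarrow> (nat \<Rightarrow> nat \<Rightarrow> real) \<Rightarrow> nat \<Rightarrow> nat \<Rightarrow> (nat \<Rightarrow> real)" where
  "mpow x Y p q = (\<lambda>j. if j < q then vpow x (\<lambda>i. Y i j) p else 0)"

definition Mmat :: "nat list \<Rightarrow> (nat \<Rightarrow> nat \<Rightarrow> real) \<Rightarrow> nat \<Rightarrow> nat \<Rightarrow> real" where
  "Mmat ms B = mmul B (Imat ms) (sum_list ms)"

definition Lsp :: "nat list \<Rightarrow> nat \<Rightarrow> (nat \<Rightarrow> nat \<Rightarrow> real) \<Rightarrow> (nat \<Rightarrow> real) set" where
  "Lsp ms n B = {v \<in> vecs n. \<exists>u \<in> vecs (sum_list ms - length ms).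
      \<forall>i<n. v i = (\<Sum>j < sum_list ms - length ms. Mmat ms B i j * u j)}"

definition Lperp :: "nat list \<Rightarrow> nat \<Rightarrow> (nat \<Rightarrow> nat \<Rightarrow> real) \<Rightarrow> (nat \<Rightarrow> real) set" where
  "Lperp ms n B = {w \<in> vecs n. \<forall>v \<in> Lsp ms n B. (\<Sum>i<n. w i * v i) = 0}"

definition Bcal :: "nat list \<Rightarrow> nat \<Rightarrow> (nat \<Rightarrow> nat \<Rightarrow> real) \<Rightarrow> nat \<Rightarrow> nat \<Rightarrow> real" where
  "Bcal ms n B = (\<lambda>i j. if i < n then B i j else Jmat ms (i - n) j)"

definition Dsp :: "nat list \<Rightarrow> nat \<Rightarrow> (nat \<Rightarrow> nat \<Rightarrow> real) \<Rightarrow> (nat \<Rightarrow> real) set" where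
  "Dsp ms n B = {z \<in> vecs (sum_list ms).
      \<forall>i < n + length ms. (\<Sum>j < sum_list ms. Bcal ms n B i j * z j) = 0}"

definition Zc :: "nat list \<Rightarrow> (nat \<Rightarrow> (nat \<Rightarrow> real) set) \<Rightarrow> nat \<Rightarrow> (nat \<Rightarrow> nat \<Rightarrow> real)
    \<Rightarrow> (nat \<Rightarrow> real) \<Rightarrow> (nat \<Rightarrow> real) set" where
  "Zc ms Cs n B c = {x \<in> posvecs n.
      (\<lambda>j. if j < sum_list ms then c j * mpow x B n (sum_list ms) j else 0) \<in> coeff_cone ms Cs}"

definition Yc :: "nat list \<Rightarrow> (nat \<Rightarrow> (nat \<Rightarrow> real) set) \<Rightarrow> nat \<Rightarrow> (nat \<Rightarrow> nat \<Rightarrow> real)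
    \<Rightarrow> (nat \<Rightarrow> real) \<Rightarrow> (nat \<Rightarrow> real) set" where
  "Yc ms Cs n B c = {y \<in> coeff_set ms Cs.
      \<forall>z \<in> Dsp ms n B. vpow y z (sum_list ms) = vpow c z (sum_list ms)}"

end

theory Submission
  imports Defs
begin

text \<open>Taking logarithms linearises everything. For \<open>x \<in> Z\<^sub>c\<close>, dividing each block of
  \<open>c \<circ> x\<^sup>B\<close> by its sum gives \<open>y \<in> P\<close> with \<open>log (y / c) = B\<^sup>T log x - J\<^sup>T \<mu>\<close>; this is
  orthogonal to \<open>D = ker B \<inter> ker J\<close>, so \<open>y \<in> Y\<^sub>c\<close>, and since \<open>I\<^sup>T J\<^sup>T = 0\<close> the vector
  \<open>log x - E\<^sup>T log (y / c) = log x - (M\<^sup>*)\<^sup>T M\<^sup>T log x\<close> is orthogonal to \<open>L = im M\<close>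
  because \<open>M M\<^sup>* M = M\<close>.
  Conversely, for \<open>y \<in> Y\<^sub>c\<close> the vector \<open>v = log (y / c)\<close> is orthogonal to \<open>I ker M \<subseteq> D\<close>,
  so \<open>I\<^sup>T v\<close> is orthogonal to \<open>ker M\<close> and hence fixed by \<open>M\<^sup>T (M\<^sup>*)\<^sup>T\<close>. For
  \<open>x = (y / c)\<^sup>E \<circ> e\<^sup>w\<close> with \<open>w \<in> L\<^sup>\<bottom>\<close> this puts \<open>log (c \<circ> x\<^sup>B) - log y\<close> into \<open>ker I\<^sup>T\<close>,
  the vectors that are constant on each block; so \<open>c \<circ> x\<^sup>B\<close> is a blockwise positive
  rescaling of \<open>y \<in> C\<close>.\<close>

definition mat_vec :: "(nat \<Rightarrow> nat \<Rightarrow> real) \<Rightarrow> nat \<Rightarrow> (nat \<Rightarrow> real) \<Rightarrow> nat \<Rightarrow> real" where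
  "mat_vec A p v i = (\<Sum>j<p. A i j * v j)"

definition vec_mat :: "(nat \<Rightarrow> real) \<Rightarrow> (nat \<Rightarrow> nat \<Rightarrow> real) \<Rightarrow> nat \<Rightarrow> nat \<Rightarrow> real" where
  "vec_mat v A p j = (\<Sum>i<p. v i * A i j)"

definition dotp :: "nat \<Rightarrow> (nat \<Rightarrow> real) \<Rightarrow> (nat \<Rightarrow> real) \<Rightarrow> real" where
  "dotp p v w = (\<Sum>i<p. v i * w i)"

lemma dotp_commute: "dotp p v w = dotp p w v"
  by (simp add: dotp_def mult.commute)

lemma mat_vec_eq_dotp: "mat_vec A p v i = dotp p (A i) v"
  by (simp add: mat_vec_def dotp_def)

lemma dotp_vec_mat: "dotp p (vec_mat w A n) u = dotp n w (mat_vec A p u)"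
  by (simp add: dotp_def vec_mat_def mat_vec_def sum_distrib_left sum_distrib_right
      mult_ac sum.swap[of _ "{..<p}"])

lemma mmul_assoc: "mmul (mmul A B p) C q = mmul A (mmul B C q) p"
  by (simp add: mmul_def fun_eq_iff sum_distrib_left sum_distrib_right mult_ac
      sum.swap[of _ "{..<p}"])

lemma mat_vec_mmul: "mat_vec (mmul A B p) q v = mat_vec A p (mat_vec B q v)"
  by (simp add: mat_vec_def mmul_def fun_eq_iff sum_distrib_left sum_distrib_right mult_ac
      sum.swap[of _ "{..<p}"])

lemma vec_mat_mmul: "vec_mat v (mmul A B p) q = vec_mat (vec_mat v A q) B p"
  by (simp add: vec_mat_def mmul_def fun_eq_iff sum_distrib_left sum_distrib_right mult_ac
      sum.swap[of _ "{..<p}"])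

lemma vec_mat_cong: "(\<And>i. i < p \<Longrightarrow> v i = v' i) \<Longrightarrow> vec_mat v A p j = vec_mat v' A p j"
  by (simp add: vec_mat_def)

lemma vec_mat_add: "vec_mat (\<lambda>i. v i + w i) A p j = vec_mat v A p j + vec_mat w A p j"
  by (simp add: vec_mat_def distrib_right sum.distrib)

lemma vec_mat_diff: "vec_mat (\<lambda>i. v i - w i) A p j = vec_mat v A p j - vec_mat w A p j"
  by (simp add: vec_mat_def left_diff_distrib sum_subtractf)

lemma ginv_vec_mat:
  assumes "\<forall>i<n. \<forall>j<p. mmul (mmul M Mstar p) M n i j = M i j" and "j < p"
  shows "vec_mat (vec_mat (vec_mat \<xi> M n) Mstar p) M n j = vec_mat \<xi> M n j"
proof -
  have "vec_mat (vec_mat (vec_mat \<xi> M n) Mstar p) M n j = vec_mat \<xi> (mmul (mmul M Mstar p) M n) n j"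
    by (simp add: vec_mat_mmul)
  also have "\<dots> = vec_mat \<xi> M n j"
    using assms by (simp add: vec_mat_def)
  finally show ?thesis .
qed

lemma ginv_vec_mat_perp_kernel:
  assumes ginv: "\<forall>i<n. \<forall>j<p. mmul (mmul M Mstar p) M n i j = M i j"
    and perp: "\<And>u. (\<forall>i<n. mat_vec M p u i = 0) \<Longrightarrow> dotp p u Q = 0"
    and "q < p"
  shows "vec_mat (vec_mat Q Mstar p) M n q = Q q"
proof -
  define u where "u q' = (if q' = q then 1 else 0) - mmul Mstar M n q' q" for q'
  \<comment> \<open>\<open>u = e\<^sub>q - M\<^sup>* M e\<^sub>q\<close> lies in \<open>ker M\<close> because \<open>M M\<^sup>* M = M\<close>.\<close>
  have "mat_vec M p u i = 0" if "i < n" for i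
  proof -
    have "mat_vec M p u i = M i q - mmul M (mmul Mstar M n) p i q"
      using \<open>q < p\<close>
      by (simp add: mat_vec_def u_def right_diff_distrib sum_subtractf mmul_def[of M]
          if_distrib[of "(*) _"] cong: if_cong)
    also have "\<dots> = 0"
      using ginv that \<open>q < p\<close> by (simp flip: mmul_assoc)
    finally show ?thesis .
  qed
  then have "dotp p Q u = 0" by (simp add: perp dotp_commute[of p Q])
  moreover have "dotp p Q u = Q q - vec_mat Q (mmul Mstar M n) p q"
    using \<open>q < p\<close>
    by (simp add: dotp_def vec_mat_def u_def right_diff_distrib sum_subtractf
        if_distrib[of "(*) _"] cong: if_cong)
  ultimately show ?thesis by (simp add: vec_mat_mmul)
qed

lemma bstart_Suc: "k < length ms \<Longrightarrow> bstart ms (Suc k) = bstart ms k + ms ! k"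
  by (simp add: bstart_def take_Suc_conv_app_nth)

lemma bstart_Cons_Suc: "bstart (x # ms) (Suc k) = x + bstart ms k"
  by (simp add: bstart_def)

lemma bstart_mono: "k \<le> k' \<Longrightarrow> bstart ms k \<le> bstart ms k'"
proof -
  assume "k \<le> k'"
  then obtain d where "k' = k + d" using le_Suc_ex by blast
  then show ?thesis by (simp add: bstart_def take_add)
qed

lemma block_end_le: "k < length ms \<Longrightarrow> bstart ms k + ms ! k \<le> sum_list ms"
  using bstart_mono[of "Suc k" "length ms" ms] by (simp add: bstart_Suc) (simp add: bstart_def)

lemma block_index_unique:
  assumes "k < length ms" "bstart ms k \<le> r" "r < bstart ms k + ms ! k"
    and "k' < length ms" "bstart ms k' \<le> r" "r < bstart ms k' + ms ! k'"
  shows "k = k'"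
proof -
  have False if "j < j'" "j' < length ms" "j < length ms" "r < bstart ms j + ms ! j"
    "bstart ms j' \<le> r" for j j'
  proof -
    have "bstart ms (Suc j) \<le> bstart ms j'" using \<open>j < j'\<close> by (simp add: bstart_mono)
    with that show False by (simp add: bstart_Suc)
  qed
  with assms show ?thesis by (metis linorder_neqE_nat)
qed

lemma block_index_exists:
  "r < sum_list ms \<Longrightarrow> \<exists>k a. k < length ms \<and> a < ms ! k \<and> r = bstart ms k + a"
proof (induction ms arbitrary: r)
  case (Cons x ms)
  show ?case
  proof (cases "r < x")
    case True
    then show ?thesis by (intro exI[of _ 0] exI[of _ r]) (simp add: bstart_def)
  next
    case False
    with Cons.prems have "r - x < sum_list ms" by simp
    then obtain k a where "k < length ms" "a < ms ! k" "r - x = bstart ms k + a"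
      using Cons.IH by blast
    with False show ?thesis
      by (intro exI[of _ "Suc k"] exI[of _ a]) (simp add: bstart_Cons_Suc)
  qed
qed simp

lemma sum_list_map_pred:
  "\<forall>x\<in>set xs. 1 \<le> x \<Longrightarrow> sum_list (map (\<lambda>a. a - 1) xs) + length xs = sum_list xs"
  by (induction xs) auto

lemma sum_list_map_pred_nth:
  "\<forall>k<length ms. 1 \<le> ms ! k \<Longrightarrow> sum_list (map (\<lambda>a. a - 1) ms) = sum_list ms - length ms"
  using sum_list_map_pred[of ms] by (metis add_diff_cancel_right' in_set_conv_nth)

lemma bstart_map_pred:
  assumes "\<forall>k<length ms. 1 \<le> ms ! k"
  shows "bstart (map (\<lambda>a. a - 1) ms) k = bstart ms k - min k (length ms)"
proof -
  have "\<forall>x\<in>set (take k ms). 1 \<le> x"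
    using assms by (metis in_set_conv_nth in_set_takeD)
  from sum_list_map_pred[OF this] show ?thesis
    by (simp add: bstart_def take_map)
qed

text \<open>The columns of \<open>I\<close> are partitioned into blocks of sizes \<open>m\<^sub>1 - 1, \<dots>, m\<^sub>l - 1\<close>.\<close>

lemma Imat_column_partition:
  assumes "\<forall>k<length ms. 1 \<le> ms ! k" "k < length ms"
  shows "bstart (map (\<lambda>a. a - 1) ms) k = bstart ms k - k" "map (\<lambda>a. a - 1) ms ! k = ms ! k - 1"
  using assms bstart_map_pred[OF assms(1), of k] by simp_all

lemma Imat_column_block_unique:
  assumes blocks_pos: "\<forall>k<length ms. 1 \<le> ms ! k"
    and "k < length ms" "bstart ms k - k \<le> q" "q < bstart ms k - k + (ms ! k - 1)"
    and "k' < length ms" "bstart ms k' - k' \<le> q" "q < bstart ms k' - k' + (ms ! k' - 1)"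
  shows "k = k'"
  by (rule block_index_unique[of k "map (\<lambda>a. a - 1) ms" q k'])
    (use assms Imat_column_partition[OF blocks_pos] in simp_all)

lemma Imat_column_index_lt:
  assumes blocks_pos: "\<forall>k<length ms. 1 \<le> ms ! k"
    and "k < length ms" "a < ms ! k - 1"
  shows "bstart ms k - k + a < sum_list ms - length ms"
  using assms block_end_le[of k "map (\<lambda>a. a - 1) ms"] Imat_column_partition[OF blocks_pos]
    sum_list_map_pred_nth[OF blocks_pos] by fastforce

lemma Imat_column_block_exists:
  assumes blocks_pos: "\<forall>k<length ms. 1 \<le> ms ! k" and "q < sum_list ms - length ms"
  shows "\<exists>k a. k < length ms \<and> a < ms ! k - 1 \<and> q = bstart ms k - k + a"
proof -
  have "q < sum_list (map (\<lambda>a. a - 1) ms)"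
    using assms sum_list_map_pred_nth[OF blocks_pos] by simp
  from block_index_exists[OF this] show ?thesis
    using Imat_column_partition[OF blocks_pos] by auto
qed

lemma Imat_column:
  assumes blocks_pos: "\<forall>k<length ms. 1 \<le> ms ! k"
    and k: "k < length ms" and a: "a < ms ! k - 1"
  shows "Imat ms r (bstart ms k - k + a) =
    (if r = bstart ms k + a then 1 else if r = bstart ms k + ms ! k - 1 then -1 else 0)"
proof -
  let ?q = "bstart ms k - k + a"
  have uniq: "k' = k" if "k' < length ms" "bstart ms k' - k' \<le> ?q"
    "?q < bstart ms k' - k' + (ms ! k' - 1)" for k'
    using Imat_column_block_unique[OF blocks_pos k _ _ that] a by simp
  have "Imat ms r ?q = (\<Sum>k'<length ms. if k' = k then
      (if bstart ms k \<le> r \<and> r < bstart ms k + ms ! k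
       then Iblock (ms ! k) (r - bstart ms k) a else 0) else 0)"
    unfolding Imat_def using uniq a by (intro sum.cong) auto
  then show ?thesis
    using k a by (auto simp: Iblock_def)
qed

lemma Imat_eq_0_outside: "sum_list ms \<le> r \<Longrightarrow> Imat ms r q = 0"
  unfolding Imat_def by (rule sum.neutral) (use block_end_le[of _ ms] in fastforce)

lemma vec_mat_Imat_column:
  assumes blocks_pos: "\<forall>k<length ms. 1 \<le> ms ! k"
    and k: "k < length ms" and a: "a < ms ! k - 1"
  shows "vec_mat t (Imat ms) (sum_list ms) (bstart ms k - k + a) =
    t (bstart ms k + a) - t (bstart ms k + ms ! k - 1)"
proof -
  have last: "bstart ms k + ms ! k - 1 < sum_list ms"
    using block_end_le[OF k] blocks_pos k by fastforce
  have "bstart ms k + a < sum_list ms"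
    using last a by linarith
  have "vec_mat t (Imat ms) (sum_list ms) (bstart ms k - k + a) =
      (\<Sum>r<sum_list ms. (if r = bstart ms k + a then t r else 0)
        - (if r = bstart ms k + ms ! k - 1 then t r else 0))"
    unfolding vec_mat_def using a by (intro sum.cong) (auto simp: Imat_column[OF blocks_pos k a])
  also have "\<dots> = t (bstart ms k + a) - t (bstart ms k + ms ! k - 1)"
    using last \<open>bstart ms k + a < sum_list ms\<close> by (simp add: sum_subtractf)
  finally show ?thesis .
qed

definition blockwise_const :: "nat list \<Rightarrow> (nat \<Rightarrow> real) \<Rightarrow> bool" where
  "blockwise_const ms t \<longleftrightarrow>
    (\<forall>k<length ms. \<forall>a<ms ! k. \<forall>a'<ms ! k. t (bstart ms k + a) = t (bstart ms k + a'))"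

lemma vec_mat_Imat_eq_0_iff:
  assumes blocks_pos: "\<forall>k<length ms. 1 \<le> ms ! k"
  shows "(\<forall>q<sum_list ms - length ms. vec_mat t (Imat ms) (sum_list ms) q = 0) \<longleftrightarrow>
    blockwise_const ms t"
proof
  assume zero: "\<forall>q<sum_list ms - length ms. vec_mat t (Imat ms) (sum_list ms) q = 0"
  have "t (bstart ms k + a) = t (bstart ms k + ms ! k - 1)" if "k < length ms" "a < ms ! k" for k a
  proof (cases "a < ms ! k - 1")
    case True
    then show ?thesis
      using zero Imat_column_index_lt[OF blocks_pos that(1) True]
        vec_mat_Imat_column[OF blocks_pos that(1) True, of t] by simp
  next
    case False
    then have "a = ms ! k - 1" using that(2) by linarith
    then show ?thesis using that(2) by simp
  qed
  then show "blockwise_const ms t"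
    unfolding blockwise_const_def by metis
next
  assume const: "blockwise_const ms t"
  show "\<forall>q<sum_list ms - length ms. vec_mat t (Imat ms) (sum_list ms) q = 0"
  proof (intro allI impI)
    fix q assume "q < sum_list ms - length ms"
    then obtain k a where ka: "k < length ms" "a < ms ! k - 1" "q = bstart ms k - k + a"
      using Imat_column_block_exists[OF blocks_pos] by blast
    moreover have "ms ! k - 1 < ms ! k" using blocks_pos ka(1) by fastforce
    ultimately have "t (bstart ms k + a) = t (bstart ms k + (ms ! k - 1))"
      using const unfolding blockwise_const_def by (meson less_trans)
    then show "vec_mat t (Imat ms) (sum_list ms) q = 0"
      using vec_mat_Imat_column[OF blocks_pos ka(1,2)] ka blocks_pos by simp
  qed
qed

lemma Jmat_block:
  assumes "k' < length ms" "a < ms ! k'" "k < length ms"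
  shows "Jmat ms k (bstart ms k' + a) = (if k = k' then 1 else 0)"
  using block_index_unique[OF assms(3) _ _ assms(1), of "bstart ms k' + a"] assms
  by (auto simp: Jmat_def)

lemma vec_mat_Jmat:
  assumes "k' < length ms" "a < ms ! k'"
  shows "vec_mat \<mu> (Jmat ms) (length ms) (bstart ms k' + a) = \<mu> k'"
  using assms by (simp add: vec_mat_def Jmat_block if_distrib[of "(*) _"] cong: if_cong)

lemma blockwise_const_vec_mat_Jmat: "blockwise_const ms (vec_mat \<mu> (Jmat ms) (length ms))"
  by (simp add: blockwise_const_def vec_mat_Jmat)

lemma blockwise_const_Jmat_row: "k < length ms \<Longrightarrow> blockwise_const ms (Jmat ms k)"
  by (simp add: blockwise_const_def Jmat_block)

lemma Jmat_Imat_eq_0: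
  assumes blocks_pos: "\<forall>k<length ms. 1 \<le> ms ! k" and "k < length ms"
  shows "mat_vec (Jmat ms) (sum_list ms) (mat_vec (Imat ms) (sum_list ms - length ms) u) k = 0"
proof -
  have "\<forall>q<sum_list ms - length ms. vec_mat (Jmat ms k) (Imat ms) (sum_list ms) q = 0"
    using vec_mat_Imat_eq_0_iff[OF blocks_pos] blockwise_const_Jmat_row[OF \<open>k < length ms\<close>]
    by blast
  then have "dotp (sum_list ms - length ms) (vec_mat (Jmat ms k) (Imat ms) (sum_list ms)) u = 0"
    by (simp add: dotp_def)
  then show ?thesis
    by (simp only: mat_vec_eq_dotp dotp_vec_mat)
qed

lemma coeff_cone_pos:
  assumes Cs_sub: "\<forall>k<length ms. Cs k \<subseteq> posvecs (ms ! k)"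
    and "y \<in> coeff_cone ms Cs" "j < sum_list ms"
  shows "y j > 0"
proof -
  obtain k a where ka: "k < length ms" "a < ms ! k" "j = bstart ms k + a"
    using block_index_exists[OF \<open>j < sum_list ms\<close>] by blast
  then have "blockv ms k y \<in> posvecs (ms ! k)"
    using assms by (auto simp: coeff_cone_def)
  then show ?thesis
    using ka by (simp add: posvecs_def blockv_def)
qed

lemma coeff_cone_scale_blocks:
  assumes Cs_cone: "\<forall>k<length ms. is_cone (Cs k)"
    and "y \<in> coeff_cone ms Cs" "F \<in> vecs (sum_list ms)" "\<forall>k<length ms. s k > 0"
    and scale: "\<forall>k<length ms. \<forall>a<ms ! k. F (bstart ms k + a) = s k * y (bstart ms k + a)"
  shows "F \<in> coeff_cone ms Cs"
  unfolding coeff_cone_def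
proof (intro CollectI conjI allI impI)
  fix k assume k: "k < length ms"
  have "blockv ms k F = (\<lambda>a. s k * blockv ms k y a)"
    using scale k by (auto simp: blockv_def)
  moreover have "blockv ms k y \<in> Cs k"
    using \<open>y \<in> coeff_cone ms Cs\<close> k by (simp add: coeff_cone_def)
  ultimately show "blockv ms k F \<in> Cs k"
    using Cs_cone k \<open>\<forall>k<length ms. s k > 0\<close> unfolding is_cone_def by simp
qed (fact \<open>F \<in> vecs (sum_list ms)\<close>)

lemma coeff_cone_normalize:
  assumes blocks_pos: "\<forall>k<length ms. 1 \<le> ms ! k"
    and Cs_sub: "\<forall>k<length ms. Cs k \<subseteq> posvecs (ms ! k)"
    and Cs_cone: "\<forall>k<length ms. is_cone (Cs k)"
    and F: "F \<in> coeff_cone ms Cs"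
  obtains \<sigma> where "\<forall>k<length ms. \<sigma> k > 0"
    "(\<lambda>j. if j < sum_list ms then F j / vec_mat \<sigma> (Jmat ms) (length ms) j else 0) \<in> coeff_set ms Cs"
proof
  define \<sigma> where "\<sigma> k = (\<Sum>a<ms ! k. F (bstart ms k + a))" for k
  define y where
    "y j = (if j < sum_list ms then F j / vec_mat \<sigma> (Jmat ms) (length ms) j else 0)" for j
  have in_block: "bstart ms k + a < sum_list ms" if "k < length ms" "a < ms ! k" for k a
    using block_end_le[OF that(1)] that(2) by linarith
  have F_pos: "F (bstart ms k + a) > 0" if "k < length ms" "a < ms ! k" for k a
    using coeff_cone_pos[OF Cs_sub F in_block[OF that]] .
  show \<sigma>_pos: "\<forall>k<length ms. \<sigma> k > 0"
  proof (intro allI impI)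
    fix k assume "k < length ms"
    then have "{..<ms ! k} \<noteq> {}" using blocks_pos by (auto simp: Suc_le_eq)
    with \<open>k < length ms\<close> show "\<sigma> k > 0"
      unfolding \<sigma>_def using F_pos by (intro sum_pos) auto
  qed
  have y_block: "y (bstart ms k + a) = inverse (\<sigma> k) * F (bstart ms k + a)"
    if "k < length ms" "a < ms ! k" for k a
    using in_block[OF that] vec_mat_Jmat[OF that, of \<sigma>]
    by (simp add: y_def divide_inverse mult.commute)
  have y_vec: "y \<in> vecs (sum_list ms)" by (simp add: vecs_def y_def)
  have "y \<in> coeff_cone ms Cs"
    using \<sigma>_pos y_block
    by (intro coeff_cone_scale_blocks[OF Cs_cone F y_vec, of "\<lambda>k. inverse (\<sigma> k)"]) auto
  moreover have "y \<in> simplices ms"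
    unfolding simplices_def
  proof (intro CollectI conjI allI impI y_vec)
    fix j show "0 \<le> y j"
      using coeff_cone_pos[OF Cs_sub \<open>y \<in> coeff_cone ms Cs\<close>, of j]
      by (cases "j < sum_list ms") (auto simp: y_def)
  next
    fix k assume k: "k < length ms"
    have "(\<Sum>a<ms ! k. y (bstart ms k + a)) = (\<Sum>a<ms ! k. inverse (\<sigma> k) * F (bstart ms k + a))"
      using k y_block by simp
    also have "\<dots> = inverse (\<sigma> k) * \<sigma> k"
      by (simp only: \<sigma>_def[of k] sum_distrib_left)
    also have "\<dots> = 1" using \<sigma>_pos k by (metis left_inverse less_irrefl)
    finally show "(\<Sum>a<ms ! k. y (bstart ms k + a)) = 1" .
  qed
  ultimately show "y \<in> coeff_set ms Cs" by (simp add: coeff_set_def)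
qed

lemma vpow_eq_exp_dotp:
  assumes "\<forall>i<p. x i > 0"
  shows "vpow x z p = exp (dotp p z (\<lambda>i. ln (x i)))"
proof -
  have "vpow x z p = (\<Prod>i<p. exp (z i * ln (x i)))"
    unfolding vpow_def using assms by (intro prod.cong) (auto simp: powr_def mult.commute)
  then show ?thesis by (simp add: dotp_def exp_sum)
qed

lemma mpow_eq_exp_vec_mat:
  "\<forall>i<p. x i > 0 \<Longrightarrow> j < q \<Longrightarrow> mpow x A p q j = exp (vec_mat (\<lambda>i. ln (x i)) A p j)"
  by (simp add: mpow_def vpow_eq_exp_dotp dotp_def vec_mat_def mult.commute)

lemma vpow_eq_iff_dotp_ln_div:
  assumes "\<forall>i<p. x i > 0" "\<forall>i<p. c i > 0"
  shows "vpow x z p = vpow c z p \<longleftrightarrow> dotp p z (\<lambda>i. ln (x i / c i)) = 0"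
proof -
  have "dotp p z (\<lambda>i. ln (x i / c i)) = (\<Sum>i<p. z i * ln (x i) - z i * ln (c i))"
    unfolding dotp_def using assms by (intro sum.cong) (auto simp: ln_div right_diff_distrib)
  then show ?thesis
    using assms by (simp add: vpow_eq_exp_dotp sum_subtractf dotp_def)
qed

lemma Dsp_iff:
  "z \<in> Dsp ms n B \<longleftrightarrow> z \<in> vecs (sum_list ms) \<and> (\<forall>i<n. mat_vec B (sum_list ms) z i = 0) \<and>
    (\<forall>k<length ms. mat_vec (Jmat ms) (sum_list ms) z k = 0)"
proof -
  have "(\<forall>i<n + length ms. P i) \<longleftrightarrow> (\<forall>i<n. P i) \<and> (\<forall>k<length ms. P (n + k))" for P
  proof safe
    fix i assume "\<forall>i<n. P i" "\<forall>k<length ms. P (n + k)" "i < n + length ms"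
    then show "P i" by (cases "i < n") (auto dest: spec[of _ "i - n"])
  qed auto
  then show ?thesis
    by (simp add: Dsp_def Bcal_def mat_vec_def)
qed

lemma Lperp_iff:
  "w \<in> Lperp ms n B \<longleftrightarrow> w \<in> vecs n \<and>
    (\<forall>q<sum_list ms - length ms. vec_mat w (Mmat ms B) n q = 0)"
  (is "_ \<longleftrightarrow> _ \<and> (\<forall>q<?p. _)")
proof safe
  fix q assume w: "w \<in> Lperp ms n B" and q: "q < ?p"
  define e where "e j = (if j = q then 1 else 0 :: real)" for j
  have col: "(\<lambda>i. if i < n then Mmat ms B i q else 0) \<in> Lsp ms n B"
    unfolding Lsp_def
  proof (intro CollectI conjI bexI[of _ e])
    show "e \<in> vecs ?p" using q by (simp add: vecs_def e_def)
  qed (use q in \<open>simp_all add: vecs_def e_def if_distrib[of "(*) _"] cong: if_cong\<close>)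
  have "\<forall>v\<in>Lsp ms n B. (\<Sum>i<n. w i * v i) = 0"
    using w by (simp add: Lperp_def)
  from this col have "(\<Sum>i<n. w i * (if i < n then Mmat ms B i q else 0)) = 0"
    by (rule bspec)
  then show "vec_mat w (Mmat ms B) n q = 0"
    by (simp add: vec_mat_def)
next
  assume w: "w \<in> vecs n" and perp: "\<forall>q<?p. vec_mat w (Mmat ms B) n q = 0"
  show "w \<in> Lperp ms n B"
    unfolding Lperp_def
  proof (intro CollectI conjI ballI w)
    fix v assume "v \<in> Lsp ms n B"
    then obtain u where "\<forall>i<n. v i = mat_vec (Mmat ms B) ?p u i"
      by (auto simp: Lsp_def mat_vec_def)
    then have "(\<Sum>i<n. w i * v i) = dotp n w (mat_vec (Mmat ms B) ?p u)"
      by (simp add: dotp_def)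
    also have "\<dots> = dotp ?p (vec_mat w (Mmat ms B) n) u"
      by (rule dotp_vec_mat[symmetric])
    also have "\<dots> = 0"
      using perp by (simp add: dotp_def)
    finally show "(\<Sum>i<n. w i * v i) = 0" .
  qed
qed (simp add: Lperp_def)

lemma Imat_kernel_in_Dsp:
  assumes blocks_pos: "\<forall>k<length ms. 1 \<le> ms ! k"
    and "\<forall>i<n. mat_vec (Mmat ms B) (sum_list ms - length ms) u i = 0"
  shows "mat_vec (Imat ms) (sum_list ms - length ms) u \<in> Dsp ms n B"
  using assms Jmat_Imat_eq_0[OF blocks_pos]
  by (simp add: Dsp_iff vecs_def mat_vec_def Imat_eq_0_outside Mmat_def mat_vec_mmul[symmetric])

locale gen_poly_system =
  fixes ms :: "nat list" and n :: nat and B Mstar :: "nat \<Rightarrow> nat \<Rightarrow> real"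
    and c :: "nat \<Rightarrow> real" and Cs :: "nat \<Rightarrow> (nat \<Rightarrow> real) set"
  assumes blocks_pos: "\<forall>k<length ms. ms ! k \<ge> 1"
    and c_pos: "\<forall>j<sum_list ms. c j > 0"
    and Cs_sub: "\<forall>k<length ms. Cs k \<subseteq> posvecs (ms ! k)"
    and Cs_cone: "\<forall>k<length ms. is_cone (Cs k)"
    and ginv: "\<forall>i<n. \<forall>j<sum_list ms - length ms.
      mmul (mmul (Mmat ms B) Mstar (sum_list ms - length ms)) (Mmat ms B) n i j = Mmat ms B i j"
begin

abbreviation "m \<equiv> sum_list ms"
abbreviation "p \<equiv> m - length ms"
abbreviation "M \<equiv> Mmat ms B"
abbreviation "E \<equiv> mmul (Imat ms) Mstar p"

lemma Yc_iff:
  "y \<in> Yc ms Cs n B c \<longleftrightarrow>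
    y \<in> coeff_set ms Cs \<and> (\<forall>z\<in>Dsp ms n B. dotp m z (\<lambda>j. ln (y j / c j)) = 0)"
  using vpow_eq_iff_dotp_ln_div[OF _ c_pos] coeff_cone_pos[OF Cs_sub]
  by (auto simp: Yc_def coeff_set_def)

lemma mpow_ratio:
  assumes "y \<in> coeff_cone ms Cs" "i < n"
  shows "mpow (\<lambda>j. y j / c j) E m n i =
    exp (vec_mat (vec_mat (\<lambda>j. ln (y j / c j)) (Imat ms) m) Mstar p i)"
  using assms coeff_cone_pos[OF Cs_sub] c_pos by (simp add: mpow_eq_exp_vec_mat vec_mat_mmul)

lemma Zc_decompose:
  assumes "x \<in> Zc ms Cs n B c"
  shows "\<exists>u w. x = (\<lambda>i. u i * exp (w i)) \<and>
    u \<in> (\<lambda>y. mpow (\<lambda>i. y i / c i) E m n) ` Yc ms Cs n B c \<and> w \<in> Lperp ms n B"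
proof -
  define F where "F = (\<lambda>j. if j < m then c j * mpow x B n m j else 0)"
  define \<xi> where "\<xi> = (\<lambda>i. ln (x i))"
  have x_pos: "\<forall>i<n. x i > 0" and x_vec: "x \<in> vecs n" and F: "F \<in> coeff_cone ms Cs"
    using assms by (auto simp: Zc_def posvecs_def F_def)
  obtain \<sigma> where \<sigma>_pos: "\<forall>k<length ms. \<sigma> k > 0" and
    y: "(\<lambda>j. if j < m then F j / vec_mat \<sigma> (Jmat ms) (length ms) j else 0) \<in> coeff_set ms Cs"
    (is "?y \<in> _")
    using coeff_cone_normalize[OF blocks_pos Cs_sub Cs_cone F] by blast
  define v where "v = (\<lambda>j. ln (?y j / c j))"
  define \<mu> where "\<mu> k = ln (\<sigma> k)" for k
  have v_eq: "v j = vec_mat \<xi> B n j - vec_mat \<mu> (Jmat ms) (length ms) j" if "j < m" for j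
  proof -
    obtain k a where ka: "k < length ms" "a < ms ! k" "j = bstart ms k + a"
      using block_index_exists[OF \<open>j < m\<close>] by blast
    have "c j > 0" using c_pos that by simp
    then have "?y j / c j = exp (vec_mat \<xi> B n j) / \<sigma> k"
      using that ka x_pos vec_mat_Jmat[OF ka(1,2), of \<sigma>]
      by (simp add: F_def mpow_eq_exp_vec_mat \<xi>_def)
    then have "v j = ln (exp (vec_mat \<xi> B n j) / \<sigma> k)"
      by (simp only: v_def)
    also have "\<dots> = vec_mat \<xi> B n j - ln (\<sigma> k)"
      using \<sigma>_pos[rule_format, OF ka(1)] by (simp add: ln_div)
    finally show ?thesis
      using vec_mat_Jmat[OF ka(1,2), of \<mu>] ka(3) by (simp add: \<mu>_def)
  qed
  have "?y \<in> Yc ms Cs n B c"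
    unfolding Yc_iff
  proof (intro conjI ballI y)
    fix z assume "z \<in> Dsp ms n B"
    then have Bz: "\<forall>i<n. mat_vec B m z i = 0" and Jz: "\<forall>k<length ms. mat_vec (Jmat ms) m z k = 0"
      by (simp_all add: Dsp_iff)
    have "dotp m z v = dotp m (vec_mat \<xi> B n) z - dotp m (vec_mat \<mu> (Jmat ms) (length ms)) z"
      unfolding dotp_def by (simp add: v_eq right_diff_distrib sum_subtractf mult.commute)
    also have "\<dots> = dotp n \<xi> (mat_vec B m z) - dotp (length ms) \<mu> (mat_vec (Jmat ms) m z)"
      by (simp add: dotp_vec_mat)
    also have "\<dots> = 0"
      using Bz Jz by (simp add: dotp_def)
    finally show "dotp m z (\<lambda>j. ln (?y j / c j)) = 0" by (simp only: v_def)
  qed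
  have Iv: "vec_mat v (Imat ms) m q = vec_mat \<xi> M n q" if "q < p" for q
  proof -
    have "vec_mat v (Imat ms) m q = vec_mat (vec_mat \<xi> B n) (Imat ms) m q
        - vec_mat (vec_mat \<mu> (Jmat ms) (length ms)) (Imat ms) m q"
      by (simp add: v_eq vec_mat_diff[symmetric] cong: vec_mat_cong)
    also have "vec_mat (vec_mat \<mu> (Jmat ms) (length ms)) (Imat ms) m q = 0"
      using vec_mat_Imat_eq_0_iff[OF blocks_pos] blockwise_const_vec_mat_Jmat that by blast
    finally show ?thesis
      by (simp add: Mmat_def vec_mat_mmul)
  qed
  define u where "u = mpow (\<lambda>j. ?y j / c j) E m n"
  define w where "w i = (if i < n then \<xi> i - vec_mat (vec_mat \<xi> M n) Mstar p i else 0)" for i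
  have u_eq: "u i = exp (vec_mat (vec_mat \<xi> M n) Mstar p i)" if "i < n" for i
    using mpow_ratio[OF _ that] y Iv by (simp add: u_def coeff_set_def v_def cong: vec_mat_cong)
  have "x = (\<lambda>i. u i * exp (w i))"
  proof
    fix i show "x i = u i * exp (w i)"
      using x_pos x_vec u_eq[of i]
      by (cases "i < n") (simp_all add: w_def \<xi>_def exp_diff vecs_def u_def mpow_def)
  qed
  moreover have "w \<in> Lperp ms n B"
    unfolding Lperp_iff
  proof (intro conjI allI impI)
    fix q assume "q < p"
    have "vec_mat w M n q = vec_mat \<xi> M n q - vec_mat (vec_mat (vec_mat \<xi> M n) Mstar p) M n q"
      by (simp add: w_def vec_mat_diff[symmetric] cong: vec_mat_cong)
    then show "vec_mat w M n q = 0"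
      using ginv_vec_mat[OF ginv \<open>q < p\<close>] by simp
  qed (simp add: vecs_def w_def)
  moreover have "u \<in> (\<lambda>y. mpow (\<lambda>i. y i / c i) E m n) ` Yc ms Cs n B c"
    unfolding u_def using \<open>?y \<in> Yc ms Cs n B c\<close> by (rule rev_image_eqI) simp
  ultimately show ?thesis by blast
qed

lemma decomposed_in_Zc:
  assumes y: "y \<in> Yc ms Cs n B c" and w: "w \<in> Lperp ms n B"
  shows "(\<lambda>i. mpow (\<lambda>j. y j / c j) E m n i * exp (w i)) \<in> Zc ms Cs n B c"
    (is "?x \<in> _")
proof -
  have y_cone: "y \<in> coeff_cone ms Cs" and y_D: "\<forall>z\<in>Dsp ms n B. dotp m z (\<lambda>j. ln (y j / c j)) = 0"
    using y by (simp_all add: Yc_iff coeff_set_def)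
  have y_pos: "y j > 0" if "j < m" for j
    using coeff_cone_pos[OF Cs_sub y_cone that] .
  have w_vec: "w \<in> vecs n" and Mw: "\<forall>q<p. vec_mat w M n q = 0"
    using w by (simp_all add: Lperp_iff)
  define v where "v = (\<lambda>j. ln (y j / c j))"
  define Q where "Q = vec_mat v (Imat ms) m"
  define \<xi> where "\<xi> = (\<lambda>i. vec_mat Q Mstar p i + w i)"
  have x_eq: "?x i = exp (\<xi> i)" if "i < n" for i
    using mpow_ratio[OF y_cone that] by (simp add: \<xi>_def Q_def v_def exp_add)
  have x_pos: "?x \<in> posvecs n"
    using x_eq w_vec by (simp add: posvecs_def vecs_def mpow_def)
  define F where "F = (\<lambda>j. if j < m then c j * mpow ?x B n m j else 0)"
  define t where "t = (\<lambda>j. vec_mat \<xi> B n j - v j)"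
  have F_eq: "F j = exp (t j) * y j" if "j < m" for j
  proof -
    have "F j = c j * exp (vec_mat \<xi> B n j)"
      using that x_eq by (simp add: F_def mpow_eq_exp_vec_mat cong: vec_mat_cong)
    then show ?thesis
      using that y_pos[OF that] c_pos by (simp add: t_def v_def exp_diff)
  qed
  have Q_perp: "dotp p u Q = 0" if "\<forall>i<n. mat_vec M p u i = 0" for u
  proof -
    have "dotp p u Q = dotp m (mat_vec (Imat ms) p u) v"
      by (simp add: Q_def dotp_commute[of p u] dotp_vec_mat dotp_commute[of m v])
    also have "\<dots> = 0"
      using y_D Imat_kernel_in_Dsp[OF blocks_pos that] by (simp add: v_def)
    finally show ?thesis .
  qed
  have "vec_mat t (Imat ms) m q = 0" if "q < p" for q
  proof -
    have "vec_mat t (Imat ms) m q = vec_mat \<xi> M n q - Q q"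
      by (simp add: t_def vec_mat_diff Q_def Mmat_def vec_mat_mmul)
    also have "vec_mat \<xi> M n q = vec_mat (vec_mat Q Mstar p) M n q + vec_mat w M n q"
      by (simp add: \<xi>_def vec_mat_add)
    also have "\<dots> = Q q"
      using ginv_vec_mat_perp_kernel[OF ginv Q_perp that] Mw that by simp
    finally show ?thesis by simp
  qed
  then have t_const: "blockwise_const ms t"
    using vec_mat_Imat_eq_0_iff[OF blocks_pos] by blast
  have "F \<in> coeff_cone ms Cs"
  proof (rule coeff_cone_scale_blocks[OF Cs_cone y_cone])
    show "F \<in> vecs m" by (simp add: vecs_def F_def)
    show "\<forall>k<length ms. exp (t (bstart ms k)) > 0" by simp
    show "\<forall>k<length ms. \<forall>a<ms ! k.
        F (bstart ms k + a) = exp (t (bstart ms k)) * y (bstart ms k + a)"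
    proof (intro allI impI)
      fix k a assume ka: "k < length ms" "a < ms ! k"
      have "0 < ms ! k" using ka(2) by simp
      then have "t (bstart ms k + a) = t (bstart ms k + 0)"
        using t_const ka unfolding blockwise_const_def by blast
      moreover have "bstart ms k + a < m"
        using block_end_le[OF ka(1)] ka(2) by linarith
      ultimately show "F (bstart ms k + a) = exp (t (bstart ms k)) * y (bstart ms k + a)"
        using F_eq by simp
    qed
  qed
  then show ?thesis
    using x_pos by (simp add: Zc_def F_def)
qed

end

theorem theorem4:
  fixes n m :: nat and ms :: "nat list" and B Mstar :: "nat \<Rightarrow> nat \<Rightarrow> real"
    and c :: "nat \<Rightarrow> real" and Cs :: "nat \<Rightarrow> (nat \<Rightarrow> real) set"
  assumes part: "sum_list ms = m"
    and blocks_pos: "\<forall>k<length ms. ms ! k \<ge> 1"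
    and c_pos: "\<forall>j<m. c j > 0"
    and Cs_sub: "\<forall>k<length ms. Cs k \<subseteq> posvecs (ms ! k)"
    and Cs_cone: "\<forall>k<length ms. is_cone (Cs k)"
    and C_ne: "coeff_cone ms Cs \<noteq> {}"
    and ginv: "\<forall>i<n. \<forall>j<m - length ms.
        mmul (mmul (Mmat ms B) Mstar (m - length ms)) (Mmat ms B) n i j = Mmat ms B i j"
  shows "Zc ms Cs n B c =
    {(\<lambda>i. u i * exp (w i)) | u w.
       u \<in> (\<lambda>y. mpow (\<lambda>i. y i / c i) (mmul (Imat ms) Mstar (m - length ms)) m n) ` Yc ms Cs n B c
       \<and> w \<in> Lperp ms n B}"
proof -
  interpret gen_poly_system ms n B Mstar c Cs
    by unfold_locales (use blocks_pos c_pos Cs_sub Cs_cone ginv part in simp_all)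
  show ?thesis
    unfolding part[symmetric] by (auto dest: Zc_decompose intro: decomposed_in_Zc)
qed

end
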